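(* In every complete lattice $\mathbf L$, the set $\Gamma$ of all non-generators is closed under binary meets and binary joins: if $a,b\in\Gamma$ then $a\wedge b\in\Gamma$ and $a\vee b\in\Gamma$.
   Context: A complete sublattice of a complete lattice $\mathbf L$ is a subset closed under arbitrary meets and joins computed in $L$ (including those of the empty set). For $X\subseteq L$, $\langle X\rangle$ is the intersection of all complete sublattices containing $X$, and $\langle X,a\rangle=\langle X\cup\{a\}\rangle$. An element $a$ is a non-generator if for every $X\subseteq L$, $\langle X,a\rangle=L$ implies $\langle X\rangle=L$. *)

theory Defs
  imports Main
begin

text \<open>Complete sublattices of a complete lattice (the whole type 'a):
  subsets closed under arbitrary meets and joins, including those of the empty set.\<close>
definition complete_sublattice :: "'a::complete_lattice set \<Rightarrow> bool" where
  "complete_sublattice S \<longleftrightarrow> (\<forall>A. A \<subseteq> S \<longrightarrow> Inf A \<in> S \<and> Sup A \<in> S)"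

definition gen :: "'a::complete_lattice set \<Rightarrow> 'a set" where
  "gen X = \<Inter> {S. complete_sublattice S \<and> X \<subseteq> S}"

definition non_generator :: "'a::complete_lattice \<Rightarrow> bool" where
  "non_generator a \<longleftrightarrow> (\<forall>X. gen (insert a X) = UNIV \<longrightarrow> gen X = UNIV)"

end

theory Submission
  imports Defs
begin

text \<open>Non-generators are closed under everything they finitely generate: if c lies in the
  complete sublattice generated by a finite set A of non-generators, then any X with
  gen (insert c X) = UNIV also has gen (A \<union> X) = UNIV, and the elements of A can then be
  discarded one at a time. Meets and joins of two non-generators are the case A = {a, b}.\<close>

lemma complete_sublattice_gen: "complete_sublattice (gen X)"
  unfolding complete_sublattice_def gen_def by blast

lemma gen_superset: "X \<subseteq> gen X"
  unfolding gen_def by blast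

lemma gen_least: "complete_sublattice S \<Longrightarrow> X \<subseteq> S \<Longrightarrow> gen X \<subseteq> S"
  unfolding gen_def by blast

lemma gen_mono: "X \<subseteq> Y \<Longrightarrow> gen X \<subseteq> gen Y"
  using gen_least[OF complete_sublattice_gen] gen_superset by blast

lemma gen_insert_mem:
  assumes "c \<in> gen X"
  shows "gen (insert c X) = gen X"
proof
  show "gen (insert c X) \<subseteq> gen X"
    using assms gen_superset by (intro gen_least[OF complete_sublattice_gen]) blast
  show "gen X \<subseteq> gen (insert c X)"
    by (rule gen_mono) blast
qed

lemma complete_sublattice_inf:
  "complete_sublattice S \<Longrightarrow> a \<in> S \<Longrightarrow> b \<in> S \<Longrightarrow> inf a b \<in> S"
  unfolding complete_sublattice_def by (metis Inf_insert Inf_empty inf_top_right empty_subsetI insert_subset)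

lemma complete_sublattice_sup:
  "complete_sublattice S \<Longrightarrow> a \<in> S \<Longrightarrow> b \<in> S \<Longrightarrow> sup a b \<in> S"
  unfolding complete_sublattice_def by (metis Sup_insert Sup_empty sup_bot_right empty_subsetI insert_subset)

lemma gen_union_non_generators:
  assumes "finite A" and "\<forall>a\<in>A. non_generator a" and "gen (A \<union> X) = UNIV"
  shows "gen X = UNIV"
  using assms
proof (induction A rule: finite_induct)
  case empty
  then show ?case by simp
next
  case (insert a A)
  then have "gen (insert a (A \<union> X)) = UNIV" by simp
  with insert.prems have "gen (A \<union> X) = UNIV" unfolding non_generator_def by blast
  with insert.IH insert.prems show ?case by blast
qed

lemma non_generator_if_mem_gen:
  assumes "finite A" and "\<forall>a\<in>A. non_generator a" and "c \<in> gen A"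
  shows "non_generator c"
  unfolding non_generator_def
proof (intro allI impI)
  fix X
  assume gen_insert_c: "gen (insert c X) = UNIV"
  have "c \<in> gen (A \<union> X)"
    using \<open>c \<in> gen A\<close> gen_mono[of A "A \<union> X"] by blast
  then have "gen (insert c X) \<subseteq> gen (A \<union> X)"
    using gen_mono[of "insert c X" "insert c (A \<union> X)"] gen_insert_mem by blast
  then have "gen (A \<union> X) = UNIV"
    using gen_insert_c by blast
  with assms(1,2) show "gen X = UNIV" by (rule gen_union_non_generators)
qed

theorem mainTheorem5:
  fixes a b :: "'a::complete_lattice"
  assumes "non_generator a" and "non_generator b"
  shows "non_generator (inf a b) \<and> non_generator (sup a b)"
proof -
  have ab: "a \<in> gen {a, b}" "b \<in> gen {a, b}"
    using gen_superset by blast+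
  have non_generator_if_mem: "non_generator c" if "c \<in> gen {a, b}" for c
    using non_generator_if_mem_gen[of "{a, b}" c] assms that by blast
  show ?thesis
    using complete_sublattice_inf[OF complete_sublattice_gen ab]
      complete_sublattice_sup[OF complete_sublattice_gen ab] non_generator_if_mem by blast
qed

end
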